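(* Let $v,\widetilde v,w\in\mathbb{R}^n$ and let $M\in\mathbb{R}^{n\times n}$ be symmetric. Let $S=\operatorname{supp}(\widetilde v-v)$, $\partial S=\operatorname{supp}(w-\widetilde v)$, $S^{\mathrm{new}}=\operatorname{supp}(w-v)$, $S'=(S\cup\partial S)\setminus S^{\mathrm{new}}$, $\Delta=\widetilde V-V$, $\Delta^{\mathrm{new}}=W-V$, and $$N=\mathcal L_*\big[(\Delta^{\mathrm{new}}_{S^{\mathrm{new}},S^{\mathrm{new}}})^{-1}+M_{S^{\mathrm{new}},S^{\mathrm{new}}}\big]-\mathcal L_*\big[\Delta_{S,S}^{-1}+M_{S,S}\big].$$ Then every nonzero entry of $N$ lies in $(S\setminus\partial S)\times\partial S$, $\partial S\times(S\setminus\partial S)$ or $\partial S\times\partial S$. Moreover: $N_{S\setminus\partial S,\ \partial S\setminus S}=M_{S\setminus\partial S,\ \partial S\setminus S}$; $N_{S\setminus\partial S,\ S'}=-M_{S\setminus\partial S,\ S'}$; and $N_{S\setminus\partial S,\ (S\cap\partial S)\setminus S'}=0$.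
   Context: For $u\in\mathbb{R}^n$, $U=\operatorname{diag}(u)$ (so $V,\widetilde V,W$ are the diagonal matrices of $v,\widetilde v,w$). $\operatorname{supp}(u)=\{i:u_i\ne0\}$. For a matrix $X$ and index sets $I,J$, $X_{I,J}$ is the submatrix with rows $I$ and columns $J$. For $T\subseteq[n]$ and a matrix $K$ with rows and columns indexed by $T$, $\mathcal L_*[K]$ denotes the matrix indexed by $[n]\times[n]$ that equals $K$ on $T\times T$, has entry $1$ on each diagonal position $(i,i)$ with $i\notin T$, and $0$ elsewhere (the same index $i\in[n]$ occupies the same position in every such embedding). Note $\Delta_{S,S}$ and $\Delta^{\mathrm{new}}_{S^{\mathrm{new}},S^{\mathrm{new}}}$ are invertible diagonal matrices. *)

theory Defs
  imports "HOL-Analysis.Analysis"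
begin

definition supp :: "real^'n \<Rightarrow> 'n set" where
  "supp u = {i. u $ i \<noteq> 0}"

definition diagm :: "real^'n \<Rightarrow> real^'n^'n" where
  "diagm u = (\<chi> i j. if i = j then u $ i else 0)"

text \<open>A matrix indexed by T x T is represented by a function 'n => 'n => real,
  of which only the entries on T x T are meaningful.
  The principal submatrix X_{T,T} of a full matrix X.\<close>
definition subm :: "real^'n^'n \<Rightarrow> 'n set \<Rightarrow> ('n \<Rightarrow> 'n \<Rightarrow> real)" where
  "subm X T = (\<lambda>i j. if i \<in> T \<and> j \<in> T then X $ i $ j else 0)"

definition sub_inv :: "'n set \<Rightarrow> ('n \<Rightarrow> 'n \<Rightarrow> real) \<Rightarrow> ('n \<Rightarrow> 'n \<Rightarrow> real)" where
  "sub_inv T K = (THE K'. (\<forall>i\<in>T. \<forall>j\<in>T. (\<Sum>k\<in>T. K i k * K' k j) = (if i = j then 1 else 0))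
                        \<and> (\<forall>i j. i \<notin> T \<or> j \<notin> T \<longrightarrow> K' i j = 0))"

definition Lstar :: "'n set \<Rightarrow> ('n \<Rightarrow> 'n \<Rightarrow> real) \<Rightarrow> real^'n^'n" where
  "Lstar T K = (\<chi> i j. if i \<in> T \<and> j \<in> T then K i j else if i = j then 1 else 0)"

end

theory Submission
  imports Defs
begin

text \<open>For \<open>T = supp d\<close> the inverted block of \<open>diagm d\<close> is diagonal, so an entry of
  \<open>Lstar T ((diagm d)\<^sub>T\<^sub>T\<^sup>-\<^sup>1 + M\<^sub>T\<^sub>T)\<close> is \<open>M\<^sub>i\<^sub>j\<close> if \<open>i, j \<in> T\<close> and otherwise \<open>0\<close>, plus, on the diagonal,
  \<open>1 / d\<^sub>i\<close> inside \<open>T\<close> and \<open>1\<close> outside. Off \<open>dS\<close> we have \<open>w = vt\<close>, so there \<open>S\<close> and \<open>Snew\<close> agree and so do \<open>w - v\<close>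
  and \<open>vt - v\<close>: the two embedded matrices cancel in every entry with neither index in \<open>dS\<close>,
  or with an index outside \<open>S \<union> dS\<close>. In a row \<open>i \<in> S - dS\<close> all that remains is whether
  \<open>j\<close> lies in \<open>Snew\<close> and in \<open>S\<close>, which yields the three stated blocks.\<close>

lemma diagm_diff: "diagm u - diagm v = diagm (u - v)"
  by (simp add: diagm_def vec_eq_iff)

lemma sub_inv_diagonal:
  fixes T :: "'n::finite set" and K :: "'n \<Rightarrow> 'n \<Rightarrow> real"
  assumes nonzero: "\<forall>i\<in>T. K i i \<noteq> 0"
    and off_diag: "\<forall>i\<in>T. \<forall>j\<in>T. i \<noteq> j \<longrightarrow> K i j = 0"
  shows "sub_inv T K = (\<lambda>i j. if i \<in> T \<and> j \<in> T \<and> i = j then 1 / K i i else 0)"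
proof -
  have row_sum: "(\<Sum>k\<in>T. K i k * K' k j) = K i i * K' i j"
    if "i \<in> T" for i j and K' :: "'n \<Rightarrow> 'n \<Rightarrow> real"
  proof -
    have "(\<Sum>k\<in>T. K i k * K' k j) = (\<Sum>k\<in>T. if k = i then K i i * K' i j else 0)"
      by (rule sum.cong) (use off_diag that in auto)
    also have "\<dots> = K i i * K' i j"
      using that by (simp add: sum.delta')
    finally show ?thesis .
  qed
  define D where "D = (\<lambda>i j. if i \<in> T \<and> j \<in> T \<and> i = j then 1 / K i i else 0)"
  have D_inverse: "(\<forall>i\<in>T. \<forall>j\<in>T. (\<Sum>k\<in>T. K i k * D k j) = (if i = j then 1 else 0))
       \<and> (\<forall>i j. i \<notin> T \<or> j \<notin> T \<longrightarrow> D i j = 0)"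
    by (simp add: row_sum) (auto simp: D_def nonzero)
  have D_unique: "K' = D"
    if inverse: "(\<forall>i\<in>T. \<forall>j\<in>T. (\<Sum>k\<in>T. K i k * K' k j) = (if i = j then 1 else 0))
       \<and> (\<forall>i j. i \<notin> T \<or> j \<notin> T \<longrightarrow> K' i j = 0)" for K'
  proof (intro ext)
    fix i j
    show "K' i j = D i j"
    proof (cases "i \<in> T \<and> j \<in> T")
      case True
      then have "K i i * K' i j = (if i = j then 1 else 0)"
        using inverse row_sum by metis
      then show ?thesis
        using True nonzero by (auto simp: D_def field_simps)
    next
      case False
      then show ?thesis
        using inverse by (auto simp: D_def)
    qed
  qed
  show ?thesis
    unfolding sub_inv_def D_def[symmetric] using D_inverse D_unique by (rule the_equality)
qed

lemma sub_inv_subm_diagm_supp: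
  "sub_inv (supp d) (subm (diagm d) (supp d))
     = (\<lambda>i j. if i \<in> supp d \<and> j \<in> supp d \<and> i = j then 1 / d $ i else 0)"
  by (subst sub_inv_diagonal) (auto intro!: ext simp: subm_def diagm_def supp_def)

lemma Lstar_inv_diagm_plus_subm_entry:
  "Lstar (supp d) (\<lambda>i j. sub_inv (supp d) (subm (diagm d) (supp d)) i j + subm M (supp d) i j) $ i $ j
     = (if i \<in> supp d \<and> j \<in> supp d then M $ i $ j else 0)
       + (if i = j then (if i \<in> supp d then 1 / d $ i else 1) else 0)"
  unfolding sub_inv_subm_diagm_supp by (simp add: Lstar_def subm_def)

theorem lemmaA5:
  fixes v vt w :: "real^'n" and M :: "real^'n^'n"
    and S dS Snew S' :: "'n set" and \<Delta> \<Delta>new N :: "real^'n^'n"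
  assumes symM: "transpose M = M"
    and S_def: "S = supp (vt - v)"
    and dS_def: "dS = supp (w - vt)"
    and Snew_def: "Snew = supp (w - v)"
    and S'_def: "S' = (S \<union> dS) - Snew"
    and \<Delta>_def: "\<Delta> = diagm vt - diagm v"
    and \<Delta>new_def: "\<Delta>new = diagm w - diagm v"
    and N_def: "N = Lstar Snew (\<lambda>i j. sub_inv Snew (subm \<Delta>new Snew) i j + subm M Snew i j)
                  - Lstar S (\<lambda>i j. sub_inv S (subm \<Delta> S) i j + subm M S i j)"
  shows "(\<forall>i j. N $ i $ j \<noteq> 0 \<longrightarrow>
            (i \<in> S - dS \<and> j \<in> dS) \<or> (i \<in> dS \<and> j \<in> S - dS) \<or> (i \<in> dS \<and> j \<in> dS))
       \<and> (\<forall>i \<in> S - dS. \<forall>j \<in> dS - S. N $ i $ j = M $ i $ j)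
       \<and> (\<forall>i \<in> S - dS. \<forall>j \<in> S'. N $ i $ j = - M $ i $ j)
       \<and> (\<forall>i \<in> S - dS. \<forall>j \<in> (S \<inter> dS) - S'. N $ i $ j = 0)"
proof -
  have N_entry: "N $ i $ j
      = (if i \<in> Snew \<and> j \<in> Snew then M $ i $ j else 0) - (if i \<in> S \<and> j \<in> S then M $ i $ j else 0)
        + (if i = j then (if i \<in> Snew then 1 / (w $ i - v $ i) else 1)
                       - (if i \<in> S then 1 / (vt $ i - v $ i) else 1) else 0)" for i j
    unfolding N_def S_def Snew_def \<Delta>_def \<Delta>new_def diagm_diff
    by (simp add: Lstar_inv_diagm_plus_subm_entry)
  have outside_dS: "i \<in> Snew \<longleftrightarrow> i \<in> S" "w $ i = vt $ i" if "i \<notin> dS" for i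
    using that by (auto simp: S_def dS_def Snew_def supp_def)
  have Snew_subset: "Snew \<subseteq> S \<union> dS" and dS_minus_S_subset: "dS - S \<subseteq> Snew"
    and S_minus_Snew_subset: "S - Snew \<subseteq> dS"
    by (auto simp: S_def dS_def Snew_def supp_def)
  have "N $ i $ j = 0" if "i \<notin> dS \<and> j \<notin> dS \<or> i \<notin> S \<union> dS \<or> j \<notin> S \<union> dS" for i j
    using that Snew_subset by (auto simp: N_entry outside_dS)
  then have support: "\<forall>i j. N $ i $ j \<noteq> 0 \<longrightarrow>
            (i \<in> S - dS \<and> j \<in> dS) \<or> (i \<in> dS \<and> j \<in> S - dS) \<or> (i \<in> dS \<and> j \<in> dS)"
    by blast
  have row_of_S_minus_dS:
    "N $ i $ j = (if j \<in> Snew then M $ i $ j else 0) - (if j \<in> S then M $ i $ j else 0)"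
    if "i \<in> S - dS" "j \<in> dS" for i j
    using that outside_dS[of i] by (auto simp: N_entry)
  show ?thesis
    using support row_of_S_minus_dS dS_minus_S_subset S_minus_Snew_subset by (auto simp: S'_def)
qed

end
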